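(* Let $p$ be an odd prime, $k$ algebraically closed of characteristic $p$, $d=p^2-1$, and let $X$ be the Artin–Schreier curve $y^p-y=-x^{d}-x^{d/2}$ over $k$. For every $\alpha=y^mx^ndx\in\mathcal B_X$ with $m\ge\frac{p-1}{2}$, we have $\mathcal C_X(\alpha)\notin\operatorname{Span}(\mathcal C_X(\mathcal B_\alpha))$.
   Context: $\mathcal C_X$ is the Cartier operator on $H^0(X,\Omega^1_X)$: the $p^{-1}$-semilinear map with $\mathcal C_X(f^p\alpha+\beta)=f\,\mathcal C_X(\alpha)+\mathcal C_X(\beta)$, $\mathcal C_X(x^{p-1}dx)=dx$, $\mathcal C_X(x^ndx)=0$ for $n\not\equiv-1\pmod p$. For an Artin–Schreier curve $y^p-y=f$ with $f\in k[x]$ of degree $D$ prime to $p$, the set $$\mathcal B_X=\left\{y^ix^jdx:\ 0\le i\le p-2,\ 0\le j\le \left\lceil\tfrac{(p-i-1)D}{p}\right\rceil-2\right\}$$ is a $k$-basis of $H^0(X,\Omega^1_X)$. Order $\mathcal B_X$ lexicographically with $y>x$: $y^ix^jdx>y^ax^bdx$ iff $i>a$, or $i=a$ and $j>b$. For $\alpha\in\mathcal B_X$, $\mathcal B_\alpha=\{\beta\in\mathcal B_X:\beta<\alpha\}$, and for a set $A$ of differentials, $\operatorname{Span}(\mathcal C_X(A))$ is the $k$-span of $\{\mathcal C_X(a):a\in A\}$. *)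

theory Defs
  imports "HOL-Computational_Algebra.Polynomial"
begin

text \<open>Differentials h dx on the Artin--Schreier curve y^p - y = f(x) are represented by
  h in k[x][y] reduced modulo y^p - y - f, i.e. as an element of type 'a poly poly
  (outer variable y, inner variable x) of y-degree < p. The basis differential
  y^i x^j dx is represented by omega i j.\<close>

definition omega :: "nat \<Rightarrow> nat \<Rightarrow> 'a::comm_ring_1 poly poly" where
  "omega i j = monom (monom 1 j) i"

definition frob_inv :: "nat \<Rightarrow> 'a::field \<Rightarrow> 'a" where
  "frob_inv p c = (THE r. r ^ p = c)"

definition cartier_x :: "nat \<Rightarrow> 'a::field poly \<Rightarrow> 'a poly" where
  "cartier_x p g = (\<Sum>n\<le>degree g.
      if n mod p = p - 1 then monom (frob_inv p (coeff g n)) ((n + 1) div p - 1) else 0)"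

text \<open>Cartier operator on h dx, h = sum_i h_i(x) y^i (y-degree < p). Using y = y^p - f,
  y^i = sum_l (i choose l) y^(p l) (-f)^(i-l), hence
  C(h_i y^i dx) = sum_l y^l C((i choose l) h_i (-f)^(i-l) dx).\<close>
definition cartier :: "nat \<Rightarrow> 'a::field poly \<Rightarrow> 'a poly poly \<Rightarrow> 'a poly poly" where
  "cartier p f h = (\<Sum>i\<le>degree h. \<Sum>l\<le>i.
      monom (cartier_x p (smult (of_nat (i choose l)) (coeff h i * (- f) ^ (i - l)))) l)"

definition BX_idx :: "nat \<Rightarrow> nat \<Rightarrow> (nat \<times> nat) set" where
  "BX_idx p D = {(i, j). i \<le> p - 2 \<and>
      int j \<le> \<lceil>(real (p - i - 1) * real D) / real p\<rceil> - 2}"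

definition lex_less :: "nat \<times> nat \<Rightarrow> nat \<times> nat \<Rightarrow> bool" where
  "lex_less ab ij \<longleftrightarrow> fst ab < fst ij \<or> (fst ab = fst ij \<and> snd ab < snd ij)"

definition kspan :: "'a::field poly poly set \<Rightarrow> 'a poly poly set" where
  "kspan S = {\<Sum>b\<in>S. smult [:c b:] b | c. True}"

definition AS_f :: "nat \<Rightarrow> 'a::comm_ring_1 poly" where
  "AS_f p = - monom 1 (p^2 - 1) - monom 1 ((p^2 - 1) div 2)"

end

theory Submission
  imports Defs "HOL-Computational_Algebra.Primes"
begin

text \<open>Write 2h = p^2 - 1, so that -f = x^(2h) + x^h and h \<equiv> -1/2 (mod p). The x-exponents
  occurring in x^n (-f)^e are n + h t with e \<le> t \<le> 2e, and the Cartier operator keeps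
  x^(n + h t) only if n + h t \<equiv> -1 (mod p), i.e. t \<equiv> 2(n+1) (mod p). For
  \<alpha> = y^m x^n dx take the least such t, namely r = 2(n+1) mod p, and the largest
  y-power l = m - \<lceil>r/2\<rceil> in which it can occur (this needs \<lceil>r/2\<rceil> \<le> (p-1)/2 \<le> m). The
  coefficient of y^l x^B (with pB + p - 1 = n + h r; we call (l, B) the pivot) in C(\<alpha>) is
  binom(m, l) binom(\<lceil>r/2\<rceil>, r - \<lceil>r/2\<rceil>), a unit mod p, while for every lex-smaller basis
  element the exponent n + h r is missed: on the same row because j < n and n < h, on a
  lower row because the bound j < (p - i - 1) p leaves no room for an extra multiple of h.\<close>

lemma CHAR_pow_eq_imp_eq:
  fixes r s :: "'a::field"
  assumes "prime p" "CHAR('a) = p" "r ^ p = s ^ p"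
  shows "r = s"
proof -
  have "(r + (- s)) ^ p = r ^ p + (- s) ^ p"
    by (rule freshmans_dream) (use assms in auto)
  also have "(- s) ^ p = - (s ^ p)"
    by (rule minus_power_prime_CHAR) (use assms in auto)
  finally have "(r - s) ^ p = 0" using assms(3) by simp
  then show ?thesis by simp
qed

lemma frob_inv_0: "p > 0 \<Longrightarrow> frob_inv p (0::'a::field) = 0"
  unfolding frob_inv_def by (rule the_equality) auto

lemma frob_inv_eq_0_iff:
  fixes c :: "'a::alg_closed_field"
  assumes "prime p" "CHAR('a) = p"
  shows "frob_inv p c = 0 \<longleftrightarrow> c = 0"
proof -
  have p0: "p > 0" using assms(1) prime_gt_0_nat by blast
  obtain r :: 'a where r: "r ^ p = c" using nth_root_exists[OF p0] by blast
  have "frob_inv p c = r"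
    unfolding frob_inv_def
    by (rule the_equality) (use r CHAR_pow_eq_imp_eq[OF assms] in auto)
  then show ?thesis using r p0 by auto
qed

lemma cartier_exponent_iff:
  fixes p k B :: nat
  assumes "p > 0"
  shows "k mod p = p - 1 \<and> (k + 1) div p - 1 = B \<longleftrightarrow> k = p * B + p - 1"
proof
  assume h: "k mod p = p - 1 \<and> (k + 1) div p - 1 = B"
  have k: "k = p * (k div p) + (p - 1)" using h div_mult_mod_eq[of k p] by (simp add: mult.commute)
  then have "k + 1 = p * (k div p + 1)" using assms by simp
  then have "B = k div p" using h assms by simp
  then show "k = p * B + p - 1" using k assms by simp
next
  assume h: "k = p * B + p - 1"
  then have "k = (p - 1) + p * B" using assms by simp
  then have "k mod p = (p - 1) mod p" by (simp only: mod_mult_self2)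
  then have "k mod p = p - 1" using assms by simp
  moreover have "k + 1 = p * (B + 1)" using h assms by simp
  ultimately show "k mod p = p - 1 \<and> (k + 1) div p - 1 = B" using assms by simp
qed

lemma coeff_cartier_x:
  fixes g :: "'a::field poly"
  assumes "p > 0"
  shows "coeff (cartier_x p g) B = frob_inv p (coeff g (p * B + p - 1))"
proof -
  have "coeff (cartier_x p g) B =
      (\<Sum>k\<le>degree g. if k = p * B + p - 1 then frob_inv p (coeff g k) else 0)"
    unfolding cartier_x_def coeff_sum
  proof (intro sum.cong refl)
    fix k
    show "coeff (if k mod p = p - 1 then monom (frob_inv p (coeff g k)) ((k + 1) div p - 1) else 0) B =
        (if k = p * B + p - 1 then frob_inv p (coeff g k) else 0)"
      using cartier_exponent_iff[OF assms, of k B] by auto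
  qed
  also have "\<dots> = frob_inv p (coeff g (p * B + p - 1))"
    using coeff_eq_0[of g "p * B + p - 1"] frob_inv_0[OF assms] by (auto simp: sum.delta)
  finally show ?thesis .
qed

lemma degree_omega: "degree (omega m n :: 'a::comm_ring_1 poly poly) = m"
  unfolding omega_def by (simp add: degree_monom_eq)

lemma coeff_omega: "coeff (omega m n :: 'a::comm_ring_1 poly poly) i = (if i = m then monom 1 n else 0)"
  unfolding omega_def by simp

lemma coeff_cartier_omega:
  fixes f :: "'a::field poly"
  assumes "p > 0"
  shows "coeff (coeff (cartier p f (omega m n)) L) B =
    (if L \<le> m then frob_inv p (of_nat (m choose L) * coeff (monom 1 n * (- f) ^ (m - L)) (p * B + p - 1))
     else 0)"
proof -
  define c where
    "c = frob_inv p (of_nat (m choose L) * coeff (monom 1 n * (- f) ^ (m - L)) (p * B + p - 1))"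
  have "coeff (coeff (cartier p f (omega m n)) L) B =
      (\<Sum>i\<le>m. \<Sum>l\<le>i. if i = m \<and> l = L then c else 0)"
    unfolding cartier_def degree_omega coeff_sum
    by (intro sum.cong refl)
      (auto simp: coeff_cartier_x[OF assms] coeff_omega frob_inv_0[OF assms] c_def)
  also have "\<dots> = (\<Sum>i\<le>m. if i = m then (if L \<le> m then c else 0) else 0)"
    by (intro sum.cong refl) auto
  also have "\<dots> = (if L \<le> m then c else 0)" by simp
  finally show ?thesis unfolding c_def .
qed

lemma minus_AS_f:
  assumes "2 * h + 1 = p ^ 2"
  shows "- (AS_f p :: 'a::comm_ring_1 poly) = monom 1 (2 * h) + monom 1 h"
proof -
  have "p ^ 2 - 1 = 2 * h" "(p ^ 2 - 1) div 2 = h" using assms by simp_all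
  then show ?thesis unfolding AS_f_def by simp
qed

lemma coeff_monom_mult_binomial_power:
  "coeff (monom 1 n * (monom 1 (2 * h) + monom 1 h :: 'a::comm_ring_1 poly) ^ e) N =
    (\<Sum>k\<le>e. if n + h * (e + k) = N then of_nat (e choose k) else 0)"
proof -
  have "(monom 1 (2 * h) + monom 1 h :: 'a poly) ^ e =
      (\<Sum>k\<le>e. of_nat (e choose k) * monom 1 (2 * h) ^ k * monom 1 h ^ (e - k))"
    by (rule binomial_ring)
  also have "\<dots> = (\<Sum>k\<le>e. monom (of_nat (e choose k)) (h * (e + k)))"
  proof (intro sum.cong refl)
    fix k assume "k \<in> {..e}"
    then have "2 * h * k + h * (e - k) = h * (e + k)"
      by (simp add: algebra_simps diff_mult_distrib2)
    then show "of_nat (e choose k) * monom 1 (2 * h) ^ k * monom 1 h ^ (e - k) =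
        (monom (of_nat (e choose k)) (h * (e + k)) :: 'a poly)"
      by (simp add: monom_power mult_monom of_nat_monom)
  qed
  finally show ?thesis
    by (simp add: sum_distrib_left coeff_sum mult_monom)
qed

lemma coeff_monom_mult_binomial_power_eq_0:
  assumes "\<And>t. e \<le> t \<Longrightarrow> t \<le> 2 * e \<Longrightarrow> n + h * t \<noteq> N"
  shows "coeff (monom 1 n * (monom 1 (2 * h) + monom 1 h :: 'a::comm_ring_1 poly) ^ e) N = 0"
  unfolding coeff_monom_mult_binomial_power using assms by (intro sum.neutral) auto

lemma coeff_monom_mult_binomial_power_at:
  assumes "h > 0" "e \<le> t" "t \<le> 2 * e"
  shows "coeff (monom 1 n * (monom 1 (2 * h) + monom 1 h :: 'a::comm_ring_1 poly) ^ e) (n + h * t) =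
    of_nat (e choose (t - e))"
proof -
  have "n + h * (e + k) = n + h * t \<longleftrightarrow> k = t - e" for k
    using assms by auto
  then show ?thesis
    unfolding coeff_monom_mult_binomial_power using assms by (simp add: sum.delta)
qed

lemma not_prime_dvd_choose:
  fixes p a b :: nat
  assumes "prime p" "a < p" "b \<le> a"
  shows "\<not> p dvd (a choose b)"
proof
  assume "p dvd (a choose b)"
  then have "p dvd fact b * fact (a - b) * (a choose b)" by simp
  also have "fact b * fact (a - b) * (a choose b) = (fact a :: nat)"
    by (rule binomial_fact_lemma[OF assms(3)])
  finally show False using prime_dvd_fact_iff[OF assms(1)] assms(2) by simp
qed

lemma cartier_omega_pivot_coeff_neq_0:
  fixes m n e r B :: nat
  assumes "prime p" "CHAR('a::alg_closed_field) = p" "2 * h + 1 = p ^ 2"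
    and "m < p" "e \<le> m" "e \<le> r" "r \<le> 2 * e" "p * B + p - 1 = n + h * r"
  shows "coeff (coeff (cartier p (AS_f p :: 'a poly) (omega m n)) (m - e)) B \<noteq> 0"
proof -
  have p0: "p > 0" using assms(1) prime_gt_0_nat by blast
  have "h > 0" using assms(1,3) prime_ge_2_nat[of p] by (cases h) (auto simp: power2_eq_square)
  then have "coeff (coeff (cartier p (AS_f p :: 'a poly) (omega m n)) (m - e)) B =
      frob_inv p (of_nat (m choose (m - e)) * of_nat (e choose (r - e)))"
    using assms
    by (simp add: coeff_cartier_omega[OF p0] minus_AS_f coeff_monom_mult_binomial_power_at)
  moreover have "\<not> p dvd (m choose (m - e)) * (e choose (r - e))"
    using not_prime_dvd_choose[OF assms(1)] assms prime_dvd_mult_iff[OF assms(1)] by auto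
  ultimately show ?thesis
    using assms(2) frob_inv_eq_0_iff[OF assms(1,2)]
    by (simp add: of_nat_eq_0_iff_char_dvd flip: of_nat_mult)
qed

lemma cartier_omega_coeff_eq_0:
  fixes i j L B :: nat
  assumes "p > 0" "2 * h + 1 = p ^ 2"
    and "\<And>t. L \<le> i \<Longrightarrow> i - L \<le> t \<Longrightarrow> t \<le> 2 * (i - L) \<Longrightarrow> j + h * t \<noteq> p * B + p - 1"
  shows "coeff (coeff (cartier p (AS_f p :: 'a::field poly) (omega i j)) L) B = 0"
  using assms frob_inv_0[OF assms(1), where 'a='a]
  by (simp add: coeff_cartier_omega minus_AS_f coeff_monom_mult_binomial_power_eq_0)

lemma obtain_pivot_x_exponent:
  fixes p h n :: nat
  assumes "prime p" "odd p" "2 * h + 1 = p ^ 2"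
  obtains B where "p * B + p - 1 = n + h * (2 * (n + 1) mod p)"
proof -
  define r where "r = 2 * (n + 1) mod p"
  have "2 * (n + h * r + 1) = p * (2 * (n + 1) div p) + (2 * h + 1) * r"
    using div_mult_mod_eq[of "2 * (n + 1)" p] by (simp add: r_def algebra_simps)
  also have "\<dots> = p * (2 * (n + 1) div p) + p ^ 2 * r" by (simp only: assms(3))
  also have "\<dots> = p * (2 * (n + 1) div p + p * r)"
    by (simp add: power2_eq_square algebra_simps)
  finally have "p dvd 2 * (n + h * r + 1)" by simp
  moreover have "\<not> p dvd 2"
    using assms(1,2) prime_ge_2_nat[of p] by (auto dest: dvd_imp_le)
  ultimately obtain c where c: "n + h * r + 1 = p * c"
    using assms(1) prime_dvd_mult_iff by blast
  then have "c > 0" by (cases c) auto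
  then have "p * (c - 1) + p - 1 = n + h * r"
    using c by (simp add: algebra_simps diff_mult_distrib2)
  then show ?thesis using that r_def by blast
qed

lemma exponent_neq_pivot_same_row:
  fixes p h m n j r e s :: nat
  assumes h: "2 * h + 1 = p ^ 2" and m: "p - 1 \<le> 2 * m" "m < p"
    and n: "n + 2 \<le> (p - m - 1) * p" and j: "j < n"
    and s: "s \<le> 2 * e" and e: "2 * e \<le> r + 1"
  shows "j + h * s \<noteq> n + h * r"
proof
  assume eq: "j + h * s = n + h * r"
  then have "h * r < h * s" using j by linarith
  then have "s = r + 1" using s e by simp
  then have "2 * n + 1 \<ge> p * p" using eq h by (simp add: power2_eq_square algebra_simps)
  moreover have "(2 * (p - m - 1) + 1) * p \<le> p * p"
    using m by (intro mult_right_mono) linarith+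
  ultimately show False using n by (simp add: algebra_simps)
qed

lemma exponent_neq_pivot_lower_row:
  fixes p h m n i j r e s :: nat
  assumes h: "2 * h + 1 = p ^ 2" and m: "p - 1 \<le> 2 * m" "m < p"
    and i: "i < m" and j: "j + 2 \<le> (p - i - 1) * p"
    and r: "r = 2 * (n + 1) mod p" and e: "e = (r + 1) div 2"
    and s: "s + 2 * (m - i) \<le> 2 * e"
  shows "j + h * s \<noteq> n + h * r"
proof
  assume eq: "j + h * s = n + h * r"
  define t where "t = r - s"
  have "s < r" using s i e by linarith
  then have jt: "j = n + h * t" and t: "2 * (m - i) \<le> t + 1" and t1: "t \<ge> 1"
    using eq s e by (auto simp: t_def algebra_simps diff_mult_distrib2)
  have "(2 * (p - i - 1) + 1) * p \<le> (p + t + 1) * p"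
    using m i t by (intro mult_right_mono) linarith+
  then have "2 * j + 4 \<le> p * p + p * t"
    using j by (simp add: algebra_simps)
  moreover have "2 * j + t = 2 * n + p * p * t"
  proof -
    have "2 * j + t = 2 * n + (2 * h + 1) * t" using jt by (simp add: algebra_simps)
    then show ?thesis by (simp only: h power2_eq_square)
  qed
  ultimately have key: "2 * n + p * p * t + 4 \<le> p * p + p * t + t" by linarith
  show False
  proof (cases "t \<ge> 2")
    case True
    define q where "q = p * p - p - 1"
    have p2: "2 * p \<le> p * p" using m i by (intro mult_right_mono) auto
    then have qp: "q + p + 1 = p * p" using m(2) unfolding q_def by linarith
    then have "q * t + p * t + t = p * p * t" by (metis add_mult_distrib mult_1)
    moreover have "q * 2 \<le> q * t" using True by simp
    ultimately show False using key p2 qp by linarith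
  next
    case False
    then have "t = 1" using t1 by simp
    then have "2 * n + 3 \<le> p" using key by simp
    then have "2 * e = r" using r e by simp
    then show False using s i t \<open>t = 1\<close> by (simp add: t_def)
  qed
qed

lemma BX_idx_sq_minus_one_bound:
  assumes "(i, j) \<in> BX_idx p (p ^ 2 - 1)" "p > 0"
  shows "i \<le> p - 2" "j + 2 \<le> (p - i - 1) * p"
proof -
  have i: "i \<le> p - 2"
    and j: "int j \<le> \<lceil>(real (p - i - 1) * real (p ^ 2 - 1)) / real p\<rceil> - 2"
    using assms(1) unfolding BX_idx_def by simp_all
  show "i \<le> p - 2" by (fact i)
  have "real (p ^ 2 - 1) \<le> real p * real p"
    by (simp flip: of_nat_mult add: power2_eq_square)
  then have "real (p - i - 1) * real (p ^ 2 - 1) \<le> real (p - i - 1) * (real p * real p)"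
    by (intro mult_left_mono) auto
  then have "(real (p - i - 1) * real (p ^ 2 - 1)) / real p \<le> real ((p - i - 1) * p)"
    using assms(2) by (simp add: pos_divide_le_eq)
  then have "\<lceil>(real (p - i - 1) * real (p ^ 2 - 1)) / real p\<rceil> \<le> int ((p - i - 1) * p)"
    by (intro ceiling_le) simp
  then show "j + 2 \<le> (p - i - 1) * p" using j by linarith
qed

lemma cartier_earlier_basis_pivot_coeff_eq_0:
  fixes p h m n i j r e B :: nat
  assumes p: "p > 0" and h: "2 * h + 1 = p ^ 2" and m: "p - 1 \<le> 2 * m"
    and mn: "(m, n) \<in> BX_idx p (p ^ 2 - 1)" and ij: "(i, j) \<in> BX_idx p (p ^ 2 - 1)"
    and lt: "lex_less (i, j) (m, n)"
    and r: "r = 2 * (n + 1) mod p" and e: "e = (r + 1) div 2" "e \<le> m"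
    and B: "p * B + p - 1 = n + h * r"
  shows "coeff (coeff (cartier p (AS_f p :: 'a::field poly) (omega i j)) (m - e)) B = 0"
proof (rule cartier_omega_coeff_eq_0[OF p h])
  fix t assume t: "m - e \<le> i" "i - (m - e) \<le> t" "t \<le> 2 * (i - (m - e))"
  have "m < p" "n + 2 \<le> (p - m - 1) * p" "j + 2 \<le> (p - i - 1) * p"
    using BX_idx_sq_minus_one_bound[OF mn p] BX_idx_sq_minus_one_bound[OF ij p] p by auto
  then have "j + h * t \<noteq> n + h * r"
  proof (cases "i = m")
    case True
    then have "j < n" using lt unfolding lex_less_def by simp
    then show ?thesis
      using exponent_neq_pivot_same_row[OF h m] True t e \<open>m < p\<close> \<open>n + 2 \<le> _\<close> by simp
  next
    case False
    then have "i < m" using lt unfolding lex_less_def by simp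
    moreover have "t + 2 * (m - i) \<le> 2 * e" using t e(2) \<open>i < m\<close> by linarith
    ultimately show ?thesis
      using exponent_neq_pivot_lower_row[OF h m \<open>m < p\<close> _ _ r e(1)]
        \<open>j + 2 \<le> (p - i - 1) * p\<close> by blast
  qed
  then show "j + h * t \<noteq> p * B + p - 1" using B by simp
qed

lemma coeff_coeff_neq_0_imp_not_in_kspan:
  assumes "coeff (coeff a L) B \<noteq> 0" "\<And>b. b \<in> S \<Longrightarrow> coeff (coeff b L) B = 0"
  shows "a \<notin> kspan S"
  using assms unfolding kspan_def by (auto simp: coeff_sum)

theorem mainTheorem9:
  fixes p m n :: nat
  assumes "prime p" and "odd p"
    and "CHAR('a::alg_closed_field) = p"
    and "(m, n) \<in> BX_idx p (p^2 - 1)"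
    and "2 * m \<ge> p - 1"
  shows "cartier p (AS_f p :: 'a poly) (omega m n)
           \<notin> kspan (cartier p (AS_f p :: 'a poly) `
                 (\<lambda>(i, j). omega i j) ` {ij \<in> BX_idx p (p^2 - 1). lex_less ij (m, n)})"
proof -
  define h where "h = (p ^ 2 - 1) div 2"
  define r where "r = 2 * (n + 1) mod p"
  define e where "e = (r + 1) div 2"
  have p: "p > 0" using assms(1) prime_gt_0_nat by blast
  have h: "2 * h + 1 = p ^ 2" using assms(2) p by (simp add: h_def)
  obtain B where B: "p * B + p - 1 = n + h * r" using obtain_pivot_x_exponent[OF assms(1,2) h] r_def by blast
  have m: "m < p" using BX_idx_sq_minus_one_bound(1)[OF assms(4) p] p by linarith
  have "r < p" "2 * e \<le> r + 1" using p by (auto simp: r_def e_def)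
  moreover have "2 * e \<noteq> p" using assms(2) by auto
  ultimately have e: "e \<le> m" "e \<le> r" "r \<le> 2 * e"
    using assms(5) by (auto simp: e_def)
  show ?thesis
    using cartier_omega_pivot_coeff_neq_0[OF assms(1,3) h m e B]
    by (rule coeff_coeff_neq_0_imp_not_in_kspan)
      (auto intro!: cartier_earlier_basis_pivot_coeff_eq_0[OF p h _ assms(4) _ _ r_def e_def]
        e B assms(5))
qed

end
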